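(* Let $T$ be an $\mathcal L$-theory and $A\subseteq M$ for some $M\models T$. The following are equivalent: (i) for every non-empty $\mathcal L(A)$-definable set $X(x)$, every $\mathcal L$-formula $\phi(x;s)$ and every $N\models T$ with $A\subseteq N$, there exists a complete $\phi$-type $p$ over $N$ which is $\mathrm{Aut}(N/A)$-invariant and consistent with $X$; (ii) $T$ has the invariant extension property over $A$: for every $N\models T$ containing $A$, every complete type over $A$ can be extended to an $\mathrm{Aut}(N/A)$-invariant complete type over $N$.
   Context: A complete $\phi$-type over $N$ is a maximal consistent set of formulas $\phi(x;m)$, $\neg\phi(x;m)$ with $m$ from $N$. A type over $N$ is $\mathrm{Aut}(N/A)$-invariant if it is fixed by every automorphism of $N$ fixing $A$ pointwise. *)

theory Defs
  imports Main
begin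

text \<open>Terms and formulas may contain
parameters (Par a) naming elements a of the ambient universe type 'a; an L(B)-formula
is a well-formed formula all of whose parameters lie in B; an L-formula has no parameters.
All structures live on subsets of a common universe type 'a (as inside a monster model).\<close>

datatype ('f, 'a) trm = Var nat | Par 'a | Fn 'f "('f, 'a) trm list"

datatype ('f, 'r, 'a) fm =
    FF
  | Rel 'r "('f, 'a) trm list"
  | Eq "('f, 'a) trm" "('f, 'a) trm"
  | Neg "('f, 'r, 'a) fm"
  | Conj "('f, 'r, 'a) fm" "('f, 'r, 'a) fm"
  | Ex nat "('f, 'r, 'a) fm"

record ('f, 'r, 'a) struct =
  dom :: "'a set"
  fint :: "'f \<Rightarrow> 'a list \<Rightarrow> 'a"
  rint :: "'r \<Rightarrow> 'a list \<Rightarrow> bool"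

definition is_struct :: "('f \<Rightarrow> nat) \<Rightarrow> ('f, 'r, 'a) struct \<Rightarrow> bool" where
  "is_struct ar_f M \<longleftrightarrow> dom M \<noteq> {} \<and>
     (\<forall>f xs. length xs = ar_f f \<and> set xs \<subseteq> dom M \<longrightarrow> fint M f xs \<in> dom M)"

primrec wf_trm :: "('f \<Rightarrow> nat) \<Rightarrow> ('f, 'a) trm \<Rightarrow> bool" where
  "wf_trm ar_f (Var i) = True"
| "wf_trm ar_f (Par a) = True"
| "wf_trm ar_f (Fn f ts) = (length ts = ar_f f \<and> list_all (\<lambda>b. b) (map (wf_trm ar_f) ts))"

primrec wf_fm :: "('f \<Rightarrow> nat) \<Rightarrow> ('r \<Rightarrow> nat) \<Rightarrow> ('f, 'r, 'a) fm \<Rightarrow> bool" where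
  "wf_fm ar_f ar_r FF = True"
| "wf_fm ar_f ar_r (Rel r ts) = (length ts = ar_r r \<and> (\<forall>t\<in>set ts. wf_trm ar_f t))"
| "wf_fm ar_f ar_r (Eq s t) = (wf_trm ar_f s \<and> wf_trm ar_f t)"
| "wf_fm ar_f ar_r (Neg \<phi>) = wf_fm ar_f ar_r \<phi>"
| "wf_fm ar_f ar_r (Conj \<phi> \<psi>) = (wf_fm ar_f ar_r \<phi> \<and> wf_fm ar_f ar_r \<psi>)"
| "wf_fm ar_f ar_r (Ex v \<phi>) = wf_fm ar_f ar_r \<phi>"

primrec fv_trm :: "('f, 'a) trm \<Rightarrow> nat set" where
  "fv_trm (Var i) = {i}"
| "fv_trm (Par a) = {}"
| "fv_trm (Fn f ts) = \<Union>(set (map fv_trm ts))"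

primrec fv :: "('f, 'r, 'a) fm \<Rightarrow> nat set" where
  "fv FF = {}"
| "fv (Rel r ts) = (\<Union>t\<in>set ts. fv_trm t)"
| "fv (Eq s t) = fv_trm s \<union> fv_trm t"
| "fv (Neg \<phi>) = fv \<phi>"
| "fv (Conj \<phi> \<psi>) = fv \<phi> \<union> fv \<psi>"
| "fv (Ex v \<phi>) = fv \<phi> - {v}"

primrec pars_trm :: "('f, 'a) trm \<Rightarrow> 'a set" where
  "pars_trm (Var i) = {}"
| "pars_trm (Par a) = {a}"
| "pars_trm (Fn f ts) = \<Union>(set (map pars_trm ts))"

primrec pars :: "('f, 'r, 'a) fm \<Rightarrow> 'a set" where
  "pars FF = {}"
| "pars (Rel r ts) = (\<Union>t\<in>set ts. pars_trm t)"
| "pars (Eq s t) = pars_trm s \<union> pars_trm t"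
| "pars (Neg \<phi>) = pars \<phi>"
| "pars (Conj \<phi> \<psi>) = pars \<phi> \<union> pars \<psi>"
| "pars (Ex v \<phi>) = pars \<phi>"

primrec eval :: "('f, 'r, 'a) struct \<Rightarrow> (nat \<Rightarrow> 'a) \<Rightarrow> ('f, 'a) trm \<Rightarrow> 'a" where
  "eval M e (Var i) = e i"
| "eval M e (Par a) = a"
| "eval M e (Fn f ts) = fint M f (map (eval M e) ts)"

primrec sat :: "('f, 'r, 'a) struct \<Rightarrow> (nat \<Rightarrow> 'a) \<Rightarrow> ('f, 'r, 'a) fm \<Rightarrow> bool" where
  "sat M e FF = False"
| "sat M e (Rel r ts) = rint M r (map (eval M e) ts)"
| "sat M e (Eq s t) = (eval M e s = eval M e t)"
| "sat M e (Neg \<phi>) = (\<not> sat M e \<phi>)"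
| "sat M e (Conj \<phi> \<psi>) = (sat M e \<phi> \<and> sat M e \<psi>)"
| "sat M e (Ex v \<phi>) = (\<exists>a\<in>dom M. sat M (e(v := a)) \<phi>)"

text \<open>Substitution of parameters for some free variables (capture-free since parameters are closed).\<close>

primrec inst_trm :: "(nat \<Rightarrow> 'a option) \<Rightarrow> ('f, 'a) trm \<Rightarrow> ('f, 'a) trm" where
  "inst_trm s (Var i) = (case s i of None \<Rightarrow> Var i | Some a \<Rightarrow> Par a)"
| "inst_trm s (Par a) = Par a"
| "inst_trm s (Fn f ts) = Fn f (map (inst_trm s) ts)"

primrec inst :: "(nat \<Rightarrow> 'a option) \<Rightarrow> ('f, 'r, 'a) fm \<Rightarrow> ('f, 'r, 'a) fm" where
  "inst s FF = FF"
| "inst s (Rel r ts) = Rel r (map (inst_trm s) ts)"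
| "inst s (Eq t u) = Eq (inst_trm s t) (inst_trm s u)"
| "inst s (Neg \<phi>) = Neg (inst s \<phi>)"
| "inst s (Conj \<phi> \<psi>) = Conj (inst s \<phi>) (inst s \<psi>)"
| "inst s (Ex v \<phi>) = Ex v (inst (s(v := None)) \<phi>)"

text \<open>Renaming parameters by a map sigma (action of automorphisms on formulas).\<close>

primrec map_par_trm :: "('a \<Rightarrow> 'a) \<Rightarrow> ('f, 'a) trm \<Rightarrow> ('f, 'a) trm" where
  "map_par_trm \<sigma> (Var i) = Var i"
| "map_par_trm \<sigma> (Par a) = Par (\<sigma> a)"
| "map_par_trm \<sigma> (Fn f ts) = Fn f (map (map_par_trm \<sigma>) ts)"

primrec map_par :: "('a \<Rightarrow> 'a) \<Rightarrow> ('f, 'r, 'a) fm \<Rightarrow> ('f, 'r, 'a) fm" where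
  "map_par \<sigma> FF = FF"
| "map_par \<sigma> (Rel r ts) = Rel r (map (map_par_trm \<sigma>) ts)"
| "map_par \<sigma> (Eq t u) = Eq (map_par_trm \<sigma> t) (map_par_trm \<sigma> u)"
| "map_par \<sigma> (Neg \<phi>) = Neg (map_par \<sigma> \<phi>)"
| "map_par \<sigma> (Conj \<phi> \<psi>) = Conj (map_par \<sigma> \<phi>) (map_par \<sigma> \<psi>)"
| "map_par \<sigma> (Ex v \<phi>) = Ex v (map_par \<sigma> \<phi>)"

definition fm_over :: "('f \<Rightarrow> nat) \<Rightarrow> ('r \<Rightarrow> nat) \<Rightarrow> 'a set \<Rightarrow> ('f, 'r, 'a) fm \<Rightarrow> bool" where
  "fm_over ar_f ar_r B \<phi> \<longleftrightarrow> wf_fm ar_f ar_r \<phi> \<and> pars \<phi> \<subseteq> B"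

abbreviation L_fm :: "('f \<Rightarrow> nat) \<Rightarrow> ('r \<Rightarrow> nat) \<Rightarrow> ('f, 'r, 'a) fm \<Rightarrow> bool" where
  "L_fm ar_f ar_r \<phi> \<equiv> fm_over ar_f ar_r {} \<phi>"

definition is_theory :: "('f \<Rightarrow> nat) \<Rightarrow> ('r \<Rightarrow> nat) \<Rightarrow> ('f, 'r, 'a) fm set \<Rightarrow> bool" where
  "is_theory ar_f ar_r T \<longleftrightarrow> (\<forall>\<phi>\<in>T. L_fm ar_f ar_r \<phi> \<and> fv \<phi> = {})"

definition models :: "('f \<Rightarrow> nat) \<Rightarrow> ('r \<Rightarrow> nat) \<Rightarrow> ('f, 'r, 'a) fm set \<Rightarrow> ('f, 'r, 'a) struct \<Rightarrow> bool" where
  "models ar_f ar_r T M \<longleftrightarrow> is_struct ar_f M \<and> (\<forall>\<phi>\<in>T. \<forall>e. sat M e \<phi>)"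

text \<open>"A is contained in N" for models M, N with A a subset of M: N contains A and
N, M have the same elementary diagram over A (i.e. both are elementary submodels of a common
monster model containing A).\<close>
definition equiv_over :: "('f \<Rightarrow> nat) \<Rightarrow> ('r \<Rightarrow> nat) \<Rightarrow> 'a set \<Rightarrow> ('f, 'r, 'a) struct \<Rightarrow> ('f, 'r, 'a) struct \<Rightarrow> bool" where
  "equiv_over ar_f ar_r A M N \<longleftrightarrow> A \<subseteq> dom M \<and> A \<subseteq> dom N \<and>
     (\<forall>\<phi> e. fm_over ar_f ar_r A \<phi> \<and> fv \<phi> = {} \<longrightarrow> (sat M e \<phi> \<longleftrightarrow> sat N e \<phi>))"

text \<open>Consistency of a set of formulas with parameters in a model M (with the elementary
diagram of M): finite satisfiability in M.\<close>
definition finsat :: "('f, 'r, 'a) struct \<Rightarrow> ('f, 'r, 'a) fm set \<Rightarrow> bool" where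
  "finsat M p \<longleftrightarrow> (\<forall>F. F \<subseteq> p \<and> finite F \<longrightarrow>
      (\<exists>e. (\<forall>i. e i \<in> dom M) \<and> (\<forall>\<psi>\<in>F. sat M e \<psi>)))"

definition complete_type :: "('f \<Rightarrow> nat) \<Rightarrow> ('r \<Rightarrow> nat) \<Rightarrow> ('f, 'r, 'a) struct \<Rightarrow> 'a set \<Rightarrow> nat \<Rightarrow> ('f, 'r, 'a) fm set \<Rightarrow> bool" where
  "complete_type ar_f ar_r M B n p \<longleftrightarrow>
     (\<forall>\<phi>\<in>p. fm_over ar_f ar_r B \<phi> \<and> fv \<phi> \<subseteq> {..<n}) \<and> finsat M p \<and>
     (\<forall>\<phi>. fm_over ar_f ar_r B \<phi> \<and> fv \<phi> \<subseteq> {..<n} \<longrightarrow> \<phi> \<in> p \<or> Neg \<phi> \<in> p)"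

text \<open>phi(x;m): for an L-formula phi(x;s) with x = x_0..x_(n-1), s = x_n..x_(n+k-1),
substitute parameters m_0..m_(k-1) for s.\<close>
definition phi_inst :: "('f, 'r, 'a) fm \<Rightarrow> nat \<Rightarrow> nat \<Rightarrow> (nat \<Rightarrow> 'a) \<Rightarrow> ('f, 'r, 'a) fm" where
  "phi_inst \<phi> n k m = inst (\<lambda>i. if n \<le> i \<and> i < n + k then Some (m (i - n)) else None) \<phi>"

definition phi_type :: "('f, 'r, 'a) struct \<Rightarrow> nat \<Rightarrow> nat \<Rightarrow> ('f, 'r, 'a) fm \<Rightarrow> ('f, 'r, 'a) fm set \<Rightarrow> bool" where
  "phi_type N n k \<phi> p \<longleftrightarrow>
     p \<subseteq> {\<psi>. \<exists>m. (\<forall>i<k. m i \<in> dom N) \<and> (\<psi> = phi_inst \<phi> n k m \<or> \<psi> = Neg (phi_inst \<phi> n k m))} \<and>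
     finsat N p \<and>
     (\<forall>m. (\<forall>i<k. m i \<in> dom N) \<longrightarrow> phi_inst \<phi> n k m \<in> p \<or> Neg (phi_inst \<phi> n k m) \<in> p)"

definition automorphism :: "('f \<Rightarrow> nat) \<Rightarrow> ('r \<Rightarrow> nat) \<Rightarrow> ('f, 'r, 'a) struct \<Rightarrow> ('a \<Rightarrow> 'a) \<Rightarrow> bool" where
  "automorphism ar_f ar_r N \<sigma> \<longleftrightarrow> bij_betw \<sigma> (dom N) (dom N) \<and>
     (\<forall>f xs. length xs = ar_f f \<and> set xs \<subseteq> dom N \<longrightarrow> \<sigma> (fint N f xs) = fint N f (map \<sigma> xs)) \<and>
     (\<forall>r xs. length xs = ar_r r \<and> set xs \<subseteq> dom N \<longrightarrow> (rint N r (map \<sigma> xs) \<longleftrightarrow> rint N r xs))"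

definition invariant :: "('f \<Rightarrow> nat) \<Rightarrow> ('r \<Rightarrow> nat) \<Rightarrow> ('f, 'r, 'a) struct \<Rightarrow> 'a set \<Rightarrow> ('f, 'r, 'a) fm set \<Rightarrow> bool" where
  "invariant ar_f ar_r N A p \<longleftrightarrow>
     (\<forall>\<sigma>. automorphism ar_f ar_r N \<sigma> \<and> (\<forall>a\<in>A. \<sigma> a = a) \<longrightarrow> map_par \<sigma> ` p = p)"

end

theory Submission
  imports Defs
begin

text \<open>If X is consistent and the theory has invariant extensions over A, take a realisation of X,
  extend its type over A to an Aut(N/A)-invariant complete type over N and keep the
  \<phi>-part. Conversely, finitely many \<phi>_l can be coded into one L-formula, so invariant
  \<phi>-types give, for every finite set of formulas and every finite part of a type q over A,
  an invariant set of formulas over N that decides all their instances and is consistent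
  with that part of q. A limit of these approximations along an ultrafilter on the finite
  pieces of data is an invariant complete type over N extending q.\<close>

section \<open>Substitution and renaming of parameters\<close>

lemma eval_inst_trm:
  "eval M e (inst_trm s t) = eval M (\<lambda>i. case s i of None \<Rightarrow> e i | Some a \<Rightarrow> a) t"
  by (induction t) (auto split: option.split simp: comp_def cong: map_cong)

lemma sat_inst: "sat M e (inst s \<phi>) = sat M (\<lambda>i. case s i of None \<Rightarrow> e i | Some a \<Rightarrow> a) \<phi>"
proof (induction \<phi> arbitrary: e s)
  case (Ex v \<phi>)
  have "(\<lambda>i. case (s(v := None)) i of None \<Rightarrow> (e(v := a)) i | Some b \<Rightarrow> b) =
      (\<lambda>i. case s i of None \<Rightarrow> e i | Some b \<Rightarrow> b)(v := a)" for a
    by (auto simp: fun_eq_iff split: option.split)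
  then show ?case using Ex by simp
qed (simp_all add: eval_inst_trm comp_def)

lemma eval_cong: "\<forall>i\<in>fv_trm t. e i = e' i \<Longrightarrow> eval M e t = eval M e' t"
proof (induction t)
  case (Fn f ts)
  then have "map (eval M e) ts = map (eval M e') ts" by (simp add: map_eq_conv)
  then show ?case by (simp only: eval.simps)
qed auto

lemma sat_cong: "\<forall>i\<in>fv \<phi>. e i = e' i \<Longrightarrow> sat M e \<phi> = sat M e' \<phi>"
proof (induction \<phi> arbitrary: e e')
  case (Rel r ts)
  then have "map (eval M e) ts = map (eval M e') ts"
    using eval_cong by (fastforce simp: map_eq_conv)
  then show ?case by (simp only: sat.simps)
next
  case (Eq s t)
  then show ?case using eval_cong[of s e e' M] eval_cong[of t e e' M] by simp
next
  case (Conj \<phi>1 \<phi>2)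
  then show ?case by (metis UnCI sat.simps(5) fv.simps(5))
next
  case (Ex v \<phi>)
  have "sat M (e(v := a)) \<phi> = sat M (e'(v := a)) \<phi>" for a
    using Ex by (intro Ex.IH) auto
  then show ?case by simp
qed auto

lemma fv_inst_trm: "fv_trm (inst_trm s t) = fv_trm t - {i. s i \<noteq> None}"
  by (induction t) (auto split: option.split)

lemma fv_inst: "fv (inst s \<phi>) = fv \<phi> - {i. s i \<noteq> None}"
  by (induction \<phi> arbitrary: s) (auto simp: fv_inst_trm)

lemma pars_inst_trm: "pars_trm (inst_trm s t) \<subseteq> pars_trm t \<union> {a. \<exists>i. s i = Some a}"
  by (induction t) (auto split: option.split)

lemma pars_inst: "pars (inst s \<phi>) \<subseteq> pars \<phi> \<union> {a. \<exists>i. s i = Some a}"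
proof (induction \<phi> arbitrary: s)
  case (Ex v \<phi>)
  have "{a. \<exists>i. (s(v := None)) i = Some a} \<subseteq> {a. \<exists>i. s i = Some a}" by auto
  then show ?case using Ex[of "s(v := None)"] by (simp only: inst.simps pars.simps) blast
qed (use pars_inst_trm in fastforce)+

lemma wf_inst_trm: "wf_trm ar_f (inst_trm s t) = wf_trm ar_f t"
  by (induction t) (auto split: option.split simp: list_all_iff)

lemma wf_inst: "wf_fm ar_f ar_r (inst s \<phi>) = wf_fm ar_f ar_r \<phi>"
  by (induction \<phi> arbitrary: s) (auto simp: wf_inst_trm)

lemma map_par_inst_trm:
  "map_par_trm \<sigma> (inst_trm s t) = inst_trm (map_option \<sigma> \<circ> s) (map_par_trm \<sigma> t)"
  by (induction t) (auto split: option.split)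

lemma map_par_inst: "map_par \<sigma> (inst s \<phi>) = inst (map_option \<sigma> \<circ> s) (map_par \<sigma> \<phi>)"
proof (induction \<phi> arbitrary: s)
  case (Ex v \<phi>)
  have "map_option \<sigma> \<circ> s(v := None) = (map_option \<sigma> \<circ> s)(v := None)" by auto
  then show ?case using Ex[of "s(v := None)"] by (simp only: inst.simps map_par.simps)
qed (simp_all add: map_par_inst_trm)

lemma map_par_trm_cong: "\<forall>a\<in>pars_trm t. \<sigma> a = \<tau> a \<Longrightarrow> map_par_trm \<sigma> t = map_par_trm \<tau> t"
  by (induction t) auto

lemma map_par_cong: "\<forall>a\<in>pars \<phi>. \<sigma> a = \<tau> a \<Longrightarrow> map_par \<sigma> \<phi> = map_par \<tau> \<phi>"
  by (induction \<phi>) (auto intro: map_par_trm_cong)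

lemma map_par_trm_ident: "map_par_trm (\<lambda>a. a) t = t"
  by (induction t) (auto intro: map_idI)

lemma map_par_ident: "map_par (\<lambda>a. a) \<phi> = \<phi>"
  by (induction \<phi>) (auto simp: map_par_trm_ident intro: map_idI)

lemma map_par_fixed: "\<forall>a\<in>pars \<phi>. \<sigma> a = a \<Longrightarrow> map_par \<sigma> \<phi> = \<phi>"
  using map_par_cong[of \<phi> \<sigma> "\<lambda>a. a"] map_par_ident by metis

lemma map_par_trm_comp: "map_par_trm \<sigma> (map_par_trm \<tau> t) = map_par_trm (\<lambda>a. \<sigma> (\<tau> a)) t"
  by (induction t) auto

lemma map_par_comp: "map_par \<sigma> (map_par \<tau> \<phi>) = map_par (\<lambda>a. \<sigma> (\<tau> a)) \<phi>"
  by (induction \<phi>) (auto simp: map_par_trm_comp)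

lemma pars_map_par_trm: "pars_trm (map_par_trm \<sigma> t) = \<sigma> ` pars_trm t"
  by (induction t) auto

lemma pars_map_par: "pars (map_par \<sigma> \<phi>) = \<sigma> ` pars \<phi>"
  by (induction \<phi>) (auto simp: pars_map_par_trm image_Union)

lemma fv_map_par_trm: "fv_trm (map_par_trm \<sigma> t) = fv_trm t"
  by (induction t) auto

lemma fv_map_par: "fv (map_par \<sigma> \<phi>) = fv \<phi>"
  by (induction \<phi>) (auto simp: fv_map_par_trm)

lemma wf_map_par_trm: "wf_trm ar_f (map_par_trm \<sigma> t) = wf_trm ar_f t"
  by (induction t) (auto simp: list_all_iff)

lemma wf_map_par: "wf_fm ar_f ar_r (map_par \<sigma> \<phi>) = wf_fm ar_f ar_r \<phi>"
  by (induction \<phi>) (auto simp: wf_map_par_trm)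

lemma finite_pars_trm: "finite (pars_trm t)"
  by (induction t) auto

lemma finite_pars: "finite (pars \<phi>)"
  by (induction \<phi>) (auto simp: finite_pars_trm)

lemma fm_over_Neg [simp]: "fm_over ar_f ar_r B (Neg \<psi>) = fm_over ar_f ar_r B \<psi>"
  by (simp add: fm_over_def)

lemma fm_over_map_par:
  "fm_over ar_f ar_r B \<psi> \<Longrightarrow> \<sigma> ` B \<subseteq> B \<Longrightarrow> fm_over ar_f ar_r B (map_par \<sigma> \<psi>)"
  by (auto simp: fm_over_def wf_map_par pars_map_par)

definition conjs :: "('f, 'r, 'a) fm list \<Rightarrow> ('f, 'r, 'a) fm" where
  "conjs xs = foldr Conj xs (Neg FF)"

lemma sat_conjs: "sat M e (conjs xs) \<longleftrightarrow> (\<forall>\<psi>\<in>set xs. sat M e \<psi>)"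
  by (induction xs) (auto simp: conjs_def)

lemma fv_conjs: "fv (conjs xs) = (\<Union>\<psi>\<in>set xs. fv \<psi>)"
  by (induction xs) (auto simp: conjs_def)

lemma fm_over_conjs: "fm_over ar_f ar_r B (conjs xs) \<longleftrightarrow> (\<forall>\<psi>\<in>set xs. fm_over ar_f ar_r B \<psi>)"
  by (induction xs) (auto simp: conjs_def fm_over_def)

definition Imp :: "('f, 'r, 'a) fm \<Rightarrow> ('f, 'r, 'a) fm \<Rightarrow> ('f, 'r, 'a) fm" where
  "Imp \<phi> \<psi> = Neg (Conj \<phi> (Neg \<psi>))"

lemma sat_Imp [simp]: "sat M e (Imp \<phi> \<psi>) \<longleftrightarrow> (sat M e \<phi> \<longrightarrow> sat M e \<psi>)"
  by (simp add: Imp_def)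

lemma finsat_mono: "finsat N p \<Longrightarrow> p' \<subseteq> p \<Longrightarrow> finsat N p'"
  unfolding finsat_def by (meson order_trans)

lemma sat_phi_inst:
  "sat M e (phi_inst \<phi> n k m) = sat M (\<lambda>i. if n \<le> i \<and> i < n + k then m (i - n) else e i) \<phi>"
proof -
  have "(\<lambda>i. case if n \<le> i \<and> i < n + k then Some (m (i - n)) else None of
              None \<Rightarrow> e i | Some a \<Rightarrow> a)
      = (\<lambda>i. if n \<le> i \<and> i < n + k then m (i - n) else e i)"
    by (auto simp: fun_eq_iff)
  then show ?thesis unfolding phi_inst_def sat_inst by simp
qed

lemma fv_phi_inst: "fv \<phi> \<subseteq> {..<n + k} \<Longrightarrow> fv (phi_inst \<phi> n k m) \<subseteq> {..<n}"
  unfolding phi_inst_def by (auto simp: fv_inst)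

lemma fm_over_phi_inst:
  assumes "L_fm ar_f ar_r \<phi>" and "\<forall>i<k. m i \<in> B"
  shows "fm_over ar_f ar_r B (phi_inst \<phi> n k m)"
proof -
  have "pars (phi_inst \<phi> n k m)
      \<subseteq> pars \<phi> \<union> {a. \<exists>i. (if n \<le> i \<and> i < n + k then Some (m (i - n)) else None) = Some a}"
    unfolding phi_inst_def by (rule pars_inst)
  also have "\<dots> \<subseteq> B"
    using assms by (auto simp: fm_over_def split: if_splits)
  finally show ?thesis
    using assms(1) by (simp add: fm_over_def phi_inst_def wf_inst)
qed

lemma map_par_phi_inst:
  assumes "pars \<phi> = {}"
  shows "map_par \<sigma> (phi_inst \<phi> n k m) = phi_inst \<phi> n k (\<sigma> \<circ> m)"
proof -
  have "map_par \<sigma> \<phi> = \<phi>" using assms by (simp add: map_par_fixed)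
  moreover have "map_option \<sigma> \<circ> (\<lambda>i. if n \<le> i \<and> i < n + k then Some (m (i - n)) else None)
      = (\<lambda>i. if n \<le> i \<and> i < n + k then Some ((\<sigma> \<circ> m) (i - n)) else None)"
    by (auto simp: fun_eq_iff)
  ultimately show ?thesis unfolding phi_inst_def by (simp only: map_par_inst)
qed

primrec abstr_trm :: "('a \<Rightarrow> nat) \<Rightarrow> ('f, 'a) trm \<Rightarrow> ('f, 'a) trm" where
  "abstr_trm g (Var i) = Var i"
| "abstr_trm g (Par a) = Var (g a)"
| "abstr_trm g (Fn f ts) = Fn f (map (abstr_trm g) ts)"

primrec abstr :: "('a \<Rightarrow> nat) \<Rightarrow> ('f, 'r, 'a) fm \<Rightarrow> ('f, 'r, 'a) fm" where
  "abstr g FF = FF"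
| "abstr g (Rel r ts) = Rel r (map (abstr_trm g) ts)"
| "abstr g (Eq t u) = Eq (abstr_trm g t) (abstr_trm g u)"
| "abstr g (Neg \<phi>) = Neg (abstr g \<phi>)"
| "abstr g (Conj \<phi> \<psi>) = Conj (abstr g \<phi>) (abstr g \<psi>)"
| "abstr g (Ex v \<phi>) = Ex v (abstr g \<phi>)"

primrec bv :: "('f, 'r, 'a) fm \<Rightarrow> nat set" where
  "bv FF = {}"
| "bv (Rel r ts) = {}"
| "bv (Eq t u) = {}"
| "bv (Neg \<phi>) = bv \<phi>"
| "bv (Conj \<phi> \<psi>) = bv \<phi> \<union> bv \<psi>"
| "bv (Ex v \<phi>) = insert v (bv \<phi>)"

lemma finite_bv: "finite (bv \<phi>)"
  by (induction \<phi>) auto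

lemma inst_abstr_trm:
  "\<forall>a\<in>pars_trm t. s (g a) = Some a \<Longrightarrow> \<forall>i\<in>fv_trm t. s i = None \<Longrightarrow> inst_trm s (abstr_trm g t) = t"
  by (induction t) (auto intro: map_idI)

lemma inst_abstr:
  "\<forall>a\<in>pars \<phi>. s (g a) = Some a \<and> g a \<notin> bv \<phi> \<Longrightarrow> \<forall>i\<in>fv \<phi>. s i = None
    \<Longrightarrow> inst s (abstr g \<phi>) = \<phi>"
proof (induction \<phi> arbitrary: s)
  case (Rel r ts)
  then show ?case by (auto simp: inst_abstr_trm intro: map_idI)
next
  case (Ex v \<phi>)
  have "inst (s(v := None)) (abstr g \<phi>) = \<phi>" using Ex.prems by (intro Ex.IH) auto
  then show ?case by simp
qed (auto simp: inst_abstr_trm)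

lemma fv_abstr_trm: "fv_trm (abstr_trm g t) \<subseteq> fv_trm t \<union> g ` pars_trm t"
  by (induction t) fastforce+

lemma fv_abstr: "fv (abstr g \<phi>) \<subseteq> fv \<phi> \<union> g ` pars \<phi>"
  by (induction \<phi>) (use fv_abstr_trm in fastforce)+

lemma pars_abstr_trm: "pars_trm (abstr_trm g t) = {}"
  by (induction t) auto

lemma wf_abstr_trm: "wf_trm ar_f (abstr_trm g t) = wf_trm ar_f t"
  by (induction t) (auto simp: list_all_iff)

lemma L_fm_abstr: "wf_fm ar_f ar_r \<phi> \<Longrightarrow> L_fm ar_f ar_r (abstr g \<phi>)"
  by (induction \<phi>) (auto simp: fm_over_def wf_abstr_trm pars_abstr_trm)

text \<open>The parameters of \<psi> are abstracted to variables above all bound variables of \<psi>, so that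
  the instantiation cannot be captured; the slots below them are padded with d.\<close>

lemma ex_phi_inst:
  assumes "fm_over ar_f ar_r D \<psi>" and "fv \<psi> \<subseteq> {..<n}" and "d \<in> D"
  obtains \<phi> k m where "L_fm ar_f ar_r \<phi>" "fv \<phi> \<subseteq> {..<n + k}" "\<forall>i<k. m i \<in> D"
    "phi_inst \<phi> n k m = \<psi>"
proof -
  obtain c :: nat and h where h: "pars \<psi> = h ` {..<c}" "inj_on h {..<c}"
    using finite_imp_nat_seg_image_inj_on[OF finite_pars[of \<psi>]] lessThan_def by metis
  define idx where "idx = the_inv_into {..<c} h"
  define B where "B = Suc (Max (bv \<psi>))"
  define g where "g a = n + B + idx a" for a
  define k where "k = B + c"
  define m where "m j = (if j < B then d else h (j - B))" for j
  have bv_less_B: "v < B" if "v \<in> bv \<psi>" for v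
    using Max_ge[OF finite_bv that] unfolding B_def by simp
  have idx: "idx a < c" "h (idx a) = a" if "a \<in> pars \<psi>" for a
    using the_inv_into_into[OF h(2), of a "{..<c}"] f_the_inv_into_f[OF h(2), of a] that h(1)
    unfolding idx_def by auto
  have g_range: "n + B \<le> g a" "n \<le> g a" "g a < n + k" "m (g a - n) = a" if "a \<in> pars \<psi>" for a
    using idx[OF that] unfolding g_def k_def m_def by simp_all
  have g_fresh: "g a \<notin> bv \<psi>" if "a \<in> pars \<psi>" for a
    using bv_less_B[of "g a"] g_range(1)[OF that] by linarith
  have "phi_inst (abstr g \<psi>) n k m = \<psi>"
    unfolding phi_inst_def using g_range g_fresh assms(2) by (intro inst_abstr) auto
  moreover have "fv (abstr g \<psi>) \<subseteq> {..<n + k}"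
  proof -
    have "g ` pars \<psi> \<subseteq> {..<n + k}" "fv \<psi> \<subseteq> {..<n + k}"
      using g_range(3) assms(2) by auto
    then show ?thesis using fv_abstr[of g \<psi>] by blast
  qed
  moreover have "L_fm ar_f ar_r (abstr g \<psi>)"
    using assms(1) by (intro L_fm_abstr) (simp add: fm_over_def)
  moreover have "m i \<in> D" if "i < k" for i
  proof (cases "i < B")
    case False
    then have "h (i - B) \<in> pars \<psi>" using that h(1) unfolding k_def by auto
    then show ?thesis using False assms(1) unfolding m_def fm_over_def by auto
  qed (use assms(3) m_def in simp)
  ultimately show thesis using that by blast
qed

section \<open>Automorphisms\<close>

lemma automorphism_in_dom:
  "automorphism ar_f ar_r N \<sigma> \<Longrightarrow> a \<in> dom N \<Longrightarrow> \<sigma> a \<in> dom N"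
  unfolding automorphism_def bij_betw_def by blast

lemma automorphism_image_dom:
  "automorphism ar_f ar_r N \<sigma> \<Longrightarrow> \<sigma> ` dom N = dom N"
  unfolding automorphism_def bij_betw_def by blast

lemma automorphism_inv_into:
  assumes "is_struct ar_f N" and aut: "automorphism ar_f ar_r N \<sigma>"
  shows "automorphism ar_f ar_r N (inv_into (dom N) \<sigma>)"
proof -
  let ?\<tau> = "inv_into (dom N) \<sigma>"
  have bij: "bij_betw \<sigma> (dom N) (dom N)" using aut unfolding automorphism_def by blast
  have inv_lists: "set (map ?\<tau> xs) \<subseteq> dom N" "map \<sigma> (map ?\<tau> xs) = xs" if "set xs \<subseteq> dom N" for xs
    using that bij_betw_inv_into_right[OF bij] bij_betw_apply[OF bij_betw_inv_into[OF bij]]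
    by (auto intro!: map_idI)
  have "?\<tau> (fint N f xs) = fint N f (map ?\<tau> xs)"
    if "length xs = ar_f f" "set xs \<subseteq> dom N" for f xs
  proof -
    have "fint N f (map ?\<tau> xs) \<in> dom N"
      using assms(1) that inv_lists(1) unfolding is_struct_def by simp
    moreover have "\<sigma> (fint N f (map ?\<tau> xs)) = fint N f xs"
      using aut that inv_lists unfolding automorphism_def by simp
    ultimately show ?thesis
      using bij_betw_inv_into_left[OF bij] by metis
  qed
  moreover have "rint N r (map ?\<tau> xs) \<longleftrightarrow> rint N r xs"
    if "length xs = ar_r r" "set xs \<subseteq> dom N" for r xs
    using aut that inv_lists unfolding automorphism_def by (metis length_map)
  ultimately show ?thesis
    using bij_betw_inv_into[OF bij] unfolding automorphism_def by blast
qed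

lemma eval_in_dom:
  assumes "is_struct ar_f N" "wf_trm ar_f t" "pars_trm t \<subseteq> dom N" "\<forall>i. e i \<in> dom N"
  shows "eval N e t \<in> dom N"
  using assms(2-)
proof (induction t)
  case (Fn f ts)
  then have "set (map (eval N e) ts) \<subseteq> dom N" by (auto simp: list_all_iff)
  then show ?case using Fn.prems assms(1) unfolding is_struct_def by simp
qed auto

lemma eval_automorphism:
  assumes "is_struct ar_f N" and aut: "automorphism ar_f ar_r N \<sigma>"
    and "wf_trm ar_f t" "pars_trm t \<subseteq> dom N" "\<forall>i. e i \<in> dom N"
  shows "eval N (\<lambda>i. \<sigma> (e i)) (map_par_trm \<sigma> t) = \<sigma> (eval N e t)"
  using assms(3-)
proof (induction t)
  case (Fn f ts)
  have ts: "length ts = ar_f f" "\<forall>t\<in>set ts. wf_trm ar_f t \<and> pars_trm t \<subseteq> dom N"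
    using Fn.prems(1,2) by (auto simp: list_all_iff)
  then have "eval N (\<lambda>i. \<sigma> (e i)) (map_par_trm \<sigma> t) = \<sigma> (eval N e t)" if "t \<in> set ts" for t
    using Fn.IH that Fn.prems(3) by blast
  then have "map (eval N (\<lambda>i. \<sigma> (e i))) (map (map_par_trm \<sigma>) ts) = map \<sigma> (map (eval N e) ts)"
    by simp
  moreover have "set (map (eval N e) ts) \<subseteq> dom N"
    using ts Fn.prems(3) eval_in_dom[OF assms(1)] by auto
  ultimately show ?case
    using ts(1) aut unfolding automorphism_def by (simp del: map_map)
qed auto

lemma sat_automorphism:
  assumes "is_struct ar_f N" and aut: "automorphism ar_f ar_r N \<sigma>"
    and "fm_over ar_f ar_r (dom N) \<phi>" and "\<forall>i. e i \<in> dom N"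
  shows "sat N (\<lambda>i. \<sigma> (e i)) (map_par \<sigma> \<phi>) \<longleftrightarrow> sat N e \<phi>"
  using assms(3,4)
proof (induction \<phi> arbitrary: e)
  case (Rel r ts)
  have ts: "length ts = ar_r r" "\<forall>t\<in>set ts. wf_trm ar_f t \<and> pars_trm t \<subseteq> dom N"
    using Rel.prems(1) by (auto simp: fm_over_def)
  then have "map (eval N (\<lambda>i. \<sigma> (e i))) (map (map_par_trm \<sigma>) ts) = map \<sigma> (map (eval N e) ts)"
    using eval_automorphism[OF assms(1,2)] Rel.prems(2) by simp
  moreover have "set (map (eval N e) ts) \<subseteq> dom N"
    using ts Rel.prems(2) eval_in_dom[OF assms(1)] by auto
  ultimately show ?case
    using ts(1) aut unfolding automorphism_def by (simp del: map_map)
next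
  case (Eq t u)
  have "inj_on \<sigma> (dom N)" using aut unfolding automorphism_def bij_betw_def by blast
  moreover have "wf_trm ar_f t" "pars_trm t \<subseteq> dom N" "wf_trm ar_f u" "pars_trm u \<subseteq> dom N"
    using Eq.prems(1) by (auto simp: fm_over_def)
  ultimately show ?case
    using Eq.prems(2) eval_automorphism[OF assms(1,2)] eval_in_dom[OF assms(1)]
    by (simp add: inj_on_eq_iff)
next
  case (Ex v \<phi>)
  have step: "sat N ((\<lambda>i. \<sigma> (e i))(v := \<sigma> b)) (map_par \<sigma> \<phi>) \<longleftrightarrow> sat N (e(v := b)) \<phi>"
    if "b \<in> dom N" for b
  proof -
    have "(\<lambda>i. \<sigma> (e i))(v := \<sigma> b) = (\<lambda>i. \<sigma> ((e(v := b)) i))" by auto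
    moreover have "fm_over ar_f ar_r (dom N) \<phi>" "\<forall>i. (e(v := b)) i \<in> dom N"
      using Ex.prems that by (auto simp: fm_over_def)
    ultimately show ?thesis using Ex.IH by presburger
  qed
  have reindex: "(\<exists>a\<in>dom N. P a) \<longleftrightarrow> (\<exists>b\<in>dom N. P (\<sigma> b))" for P
    using automorphism_image_dom[OF aut] by (metis image_iff)
  have "sat N (\<lambda>i. \<sigma> (e i)) (map_par \<sigma> (Ex v \<phi>))
      \<longleftrightarrow> (\<exists>b\<in>dom N. sat N ((\<lambda>i. \<sigma> (e i))(v := \<sigma> b)) (map_par \<sigma> \<phi>))"
    using reindex[of "\<lambda>a. sat N ((\<lambda>i. \<sigma> (e i))(v := a)) (map_par \<sigma> \<phi>)"] by simp
  also have "\<dots> \<longleftrightarrow> (\<exists>b\<in>dom N. sat N (e(v := b)) \<phi>)"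
    by (rule bex_cong[OF refl step])
  finally show ?case by simp
qed (auto simp: fm_over_def)

lemma invariantI:
  assumes "is_struct ar_f N" "A \<subseteq> dom N" "\<forall>\<psi>\<in>S. pars \<psi> \<subseteq> dom N"
    and closed: "\<And>\<sigma>. automorphism ar_f ar_r N \<sigma> \<Longrightarrow> \<forall>a\<in>A. \<sigma> a = a \<Longrightarrow> map_par \<sigma> ` S \<subseteq> S"
  shows "invariant ar_f ar_r N A S"
  unfolding invariant_def
proof (intro allI impI)
  fix \<sigma> assume "automorphism ar_f ar_r N \<sigma> \<and> (\<forall>a\<in>A. \<sigma> a = a)"
  then have aut: "automorphism ar_f ar_r N \<sigma>" and fix_A: "\<forall>a\<in>A. \<sigma> a = a" by auto
  let ?\<tau> = "inv_into (dom N) \<sigma>"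
  have bij: "bij_betw \<sigma> (dom N) (dom N)" using aut unfolding automorphism_def by blast
  have "\<forall>a\<in>A. ?\<tau> a = a"
    using fix_A assms(2) bij_betw_inv_into_left[OF bij] by (metis subsetD)
  then have "map_par ?\<tau> ` S \<subseteq> S"
    using closed automorphism_inv_into[OF assms(1) aut] by blast
  moreover have "map_par \<sigma> (map_par ?\<tau> \<psi>) = \<psi>" if "\<psi> \<in> S" for \<psi>
    using that assms(3) bij_betw_inv_into_right[OF bij]
    by (auto simp: map_par_comp intro!: map_par_fixed)
  ultimately have "S \<subseteq> map_par \<sigma> ` S" by (auto intro: image_eqI[OF sym])
  then show "map_par \<sigma> ` S = S" using closed[OF aut fix_A] by blast
qed

definition consequences ::
  "('f \<Rightarrow> nat) \<Rightarrow> ('r \<Rightarrow> nat) \<Rightarrow> ('f, 'r, 'a) struct \<Rightarrow> nat \<Rightarrow> ('f, 'r, 'a) fm set \<Rightarrow> ('f, 'r, 'a) fm set"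
  where "consequences ar_f ar_r N n P = {\<psi>. fm_over ar_f ar_r (dom N) \<psi> \<and> fv \<psi> \<subseteq> {..<n} \<and>
     (\<exists>w\<in>P. \<forall>e. (\<forall>i. e i \<in> dom N) \<longrightarrow> sat N e w \<longrightarrow> sat N e \<psi>)}"

lemma consequencesI:
  assumes "fm_over ar_f ar_r (dom N) \<psi>" "fv \<psi> \<subseteq> {..<n}" "w \<in> P"
    and "\<And>e. \<forall>i. e i \<in> dom N \<Longrightarrow> sat N e w \<Longrightarrow> sat N e \<psi>"
  shows "\<psi> \<in> consequences ar_f ar_r N n P"
  using assms unfolding consequences_def by blast

lemma consequences_mono: "P \<subseteq> P' \<Longrightarrow> consequences ar_f ar_r N n P \<subseteq> consequences ar_f ar_r N n P'"
  unfolding consequences_def by blast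

lemma finsat_consequences:
  assumes "finsat N P"
  shows "finsat N (consequences ar_f ar_r N n P)"
  unfolding finsat_def
proof (intro allI impI)
  fix F assume F: "F \<subseteq> consequences ar_f ar_r N n P \<and> finite F"
  then have "\<forall>\<psi>\<in>F. \<exists>w\<in>P. \<forall>e. (\<forall>i. e i \<in> dom N) \<longrightarrow> sat N e w \<longrightarrow> sat N e \<psi>"
    unfolding consequences_def by blast
  then obtain w where w: "\<forall>\<psi>\<in>F. w \<psi> \<in> P \<and> (\<forall>e. (\<forall>i. e i \<in> dom N) \<longrightarrow> sat N e (w \<psi>) \<longrightarrow> sat N e \<psi>)"
    by (metis bchoice)
  have "finite (w ` F)" "w ` F \<subseteq> P" using F w by auto
  then obtain e where "\<forall>i. e i \<in> dom N" "\<forall>\<psi>\<in>w ` F. sat N e \<psi>"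
    using assms unfolding finsat_def by blast
  then show "\<exists>e. (\<forall>i. e i \<in> dom N) \<and> (\<forall>\<psi>\<in>F. sat N e \<psi>)" using w by blast
qed

lemma map_par_consequences:
  assumes "is_struct ar_f N" and aut: "automorphism ar_f ar_r N \<sigma>"
    and "map_par \<sigma> ` P \<subseteq> P" and "\<forall>w\<in>P. fm_over ar_f ar_r (dom N) w"
  shows "map_par \<sigma> ` consequences ar_f ar_r N n P \<subseteq> consequences ar_f ar_r N n P"
proof
  fix \<psi>' assume "\<psi>' \<in> map_par \<sigma> ` consequences ar_f ar_r N n P"
  then obtain \<psi> w where \<psi>: "\<psi>' = map_par \<sigma> \<psi>" "fm_over ar_f ar_r (dom N) \<psi>" "fv \<psi> \<subseteq> {..<n}"
    and w: "w \<in> P" "\<forall>e. (\<forall>i. e i \<in> dom N) \<longrightarrow> sat N e w \<longrightarrow> sat N e \<psi>"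
    unfolding consequences_def by blast
  have dom_closed: "\<sigma> ` dom N \<subseteq> dom N" using automorphism_image_dom[OF aut] by simp
  have "sat N e \<psi>'" if e: "\<forall>i. e i \<in> dom N" "sat N e (map_par \<sigma> w)" for e
  proof -
    let ?e = "\<lambda>i. inv_into (dom N) \<sigma> (e i)"
    have bij: "bij_betw \<sigma> (dom N) (dom N)" using aut unfolding automorphism_def by blast
    have e_eq: "(\<lambda>i. \<sigma> (?e i)) = e" and e_dom: "\<forall>i. ?e i \<in> dom N"
      using e(1) bij_betw_inv_into_right[OF bij] bij_betw_apply[OF bij_betw_inv_into[OF bij]]
      by auto
    have "sat N ?e w"
      using e(2) sat_automorphism[OF assms(1) aut _ e_dom] assms(4) w(1) e_eq by metis
    then have "sat N ?e \<psi>" using w(2) e_dom by simp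
    then show ?thesis
      using sat_automorphism[OF assms(1) aut \<psi>(2) e_dom] e_eq \<psi>(1) by simp
  qed
  moreover have "map_par \<sigma> w \<in> P" using assms(3) w(1) by blast
  moreover have "fm_over ar_f ar_r (dom N) \<psi>'" "fv \<psi>' \<subseteq> {..<n}"
    using \<psi> fm_over_map_par[OF _ dom_closed] by (auto simp: fv_map_par)
  ultimately show "\<psi>' \<in> consequences ar_f ar_r N n P"
    unfolding consequences_def by blast
qed

section \<open>Ultrafilters on finite subsets\<close>

definition fip_on :: "'i set \<Rightarrow> 'i set set \<Rightarrow> bool" where
  "fip_on I U \<longleftrightarrow> (\<forall>F. finite F \<and> F \<subseteq> U \<longrightarrow> I \<inter> \<Inter>F \<noteq> {})"

definition ultra_on :: "'i set \<Rightarrow> 'i set set \<Rightarrow> bool" where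
  "ultra_on I U \<longleftrightarrow> U \<subseteq> Pow I \<and> fip_on I U \<and> (\<forall>X\<subseteq>I. X \<in> U \<or> I - X \<in> U)"

lemma fip_onD: "fip_on I U \<Longrightarrow> finite F \<Longrightarrow> F \<subseteq> U \<Longrightarrow> I \<inter> \<Inter>F \<noteq> {}"
  by (simp add: fip_on_def)

lemma fip_on_insert_compl:
  assumes "fip_on I U" "\<not> fip_on I (insert X U)" "\<not> fip_on I (insert (I - X) U)"
  shows False
proof -
  obtain F1 where F1: "finite F1" "F1 \<subseteq> insert X U" "I \<inter> \<Inter>F1 = {}"
    using assms(2) unfolding fip_on_def by auto
  obtain F2 where F2: "finite F2" "F2 \<subseteq> insert (I - X) U" "I \<inter> \<Inter>F2 = {}"
    using assms(3) unfolding fip_on_def by auto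
  have "finite ((F1 - {X}) \<union> (F2 - {I - X}))" "(F1 - {X}) \<union> (F2 - {I - X}) \<subseteq> U"
    using F1 F2 by blast+
  then have "I \<inter> \<Inter>((F1 - {X}) \<union> (F2 - {I - X})) \<noteq> {}"
    by (rule fip_onD[OF assms(1)])
  then obtain i where i: "i \<in> I" "i \<in> \<Inter>(F1 - {X})" "i \<in> \<Inter>(F2 - {I - X})" by auto
  show False
  proof (cases "i \<in> X")
    case True
    then have "i \<in> I \<inter> \<Inter>F1" using i F1(2) by auto
    then show False using F1(3) by simp
  next
    case False
    then have "i \<in> I \<inter> \<Inter>F2" using i F2(2) by auto
    then show False using F2(3) by simp
  qed
qed

lemma fip_on_Union_chain:
  assumes "subset.chain \<A> C" "C \<noteq> {}" "\<forall>U\<in>C. fip_on I U"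
  shows "fip_on I (\<Union>C)"
  unfolding fip_on_def
proof (intro allI impI)
  fix F assume F: "finite F \<and> F \<subseteq> \<Union>C"
  then obtain U where "U \<in> C" "F \<subseteq> U"
    using finite_subset_Union_chain[of F C] assms(1,2) by blast
  then show "I \<inter> \<Inter>F \<noteq> {}" using F assms(3) fip_onD by blast
qed

lemma ultra_on_extend:
  assumes "B \<subseteq> Pow I" "fip_on I B"
  obtains U where "B \<subseteq> U" "ultra_on I U"
proof -
  let ?\<F> = "{U. B \<subseteq> U \<and> U \<subseteq> Pow I \<and> fip_on I U}"
  have "\<forall>C\<in>chains ?\<F>. \<exists>U\<in>?\<F>. \<forall>X\<in>C. X \<subseteq> U"
  proof
    fix C assume C: "C \<in> chains ?\<F>"
    show "\<exists>U\<in>?\<F>. \<forall>X\<in>C. X \<subseteq> U"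
    proof (cases "C = {}")
      case True
      then show ?thesis using assms by blast
    next
      case False
      have "subset.chain ?\<F> C" using C by (simp add: chains_alt_def)
      moreover have "\<forall>U\<in>C. fip_on I U" using C unfolding chains_def by blast
      ultimately have "fip_on I (\<Union>C)" using fip_on_Union_chain False by blast
      moreover have "B \<subseteq> \<Union>C" "\<Union>C \<subseteq> Pow I"
        using C False unfolding chains_def by blast+
      ultimately have "\<Union>C \<in> ?\<F>" by blast
      then show ?thesis by blast
    qed
  qed
  then obtain U where U: "U \<in> ?\<F>" and max: "\<forall>X\<in>?\<F>. U \<subseteq> X \<longrightarrow> X = U"
    by (rule Zorn_Lemma2[THEN bexE])
  have grow: "Y \<in> U" if "Y \<subseteq> I" "fip_on I (insert Y U)" for Y
  proof -
    have "insert Y U \<in> ?\<F>" using U that by auto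
    then have "insert Y U = U" by (rule max[rule_format, OF _ subset_insertI])
    then show ?thesis by blast
  qed
  have "X \<in> U \<or> I - X \<in> U" if "X \<subseteq> I" for X
  proof (rule ccontr)
    assume "\<not> (X \<in> U \<or> I - X \<in> U)"
    then have "\<not> fip_on I (insert X U)" "\<not> fip_on I (insert (I - X) U)"
      using grow[OF that] grow[OF Diff_subset] by blast+
    moreover have "fip_on I U" using U by simp
    ultimately show False by (intro fip_on_insert_compl)
  qed
  then show thesis using U by (intro that[of U]) (simp_all add: ultra_on_def)
qed

lemma ultra_on_Fpow:
  obtains U where "ultra_on (Fpow D) U" "\<forall>\<Delta>\<in>Fpow D. {\<Delta>' \<in> Fpow D. \<Delta> \<subseteq> \<Delta>'} \<in> U"
proof -
  let ?cone = "\<lambda>\<Delta>. {\<Delta>' \<in> Fpow D. \<Delta> \<subseteq> \<Delta>'}"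
  have fip: "fip_on (Fpow D) (?cone ` Fpow D)"
    unfolding fip_on_def
  proof (intro allI impI)
    fix F assume "finite F \<and> F \<subseteq> ?cone ` Fpow D"
    then obtain G where G: "G \<subseteq> Fpow D" "finite G" "F = ?cone ` G"
      using finite_subset_image[of F ?cone "Fpow D"] by (elim conjE exE) auto
    then have "\<Union>G \<in> Fpow D \<inter> \<Inter>F" by (auto simp: Fpow_def)
    then show "Fpow D \<inter> \<Inter>F \<noteq> {}" by blast
  qed
  have "?cone ` Fpow D \<subseteq> Pow (Fpow D)" by blast
  then obtain U where "?cone ` Fpow D \<subseteq> U" "ultra_on (Fpow D) U"
    using fip by (rule ultra_on_extend)
  then show thesis using that by blast
qed

definition ulim :: "'i set \<Rightarrow> 'i set set \<Rightarrow> ('i \<Rightarrow> 'x set) \<Rightarrow> 'x set" where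
  "ulim I U S = {x. {i \<in> I. x \<in> S i} \<in> U}"

lemma ultra_on_fip: "ultra_on I U \<Longrightarrow> finite F \<Longrightarrow> F \<subseteq> U \<Longrightarrow> I \<inter> \<Inter>F \<noteq> {}"
  by (simp add: ultra_on_def fip_on_def)

lemma ulim_finite_subset:
  assumes U: "ultra_on I U" and "finite F" "F \<subseteq> ulim I U S" "X \<in> U"
  obtains i where "i \<in> I" "i \<in> X" "F \<subseteq> S i"
proof -
  let ?G = "insert X ((\<lambda>x. {i \<in> I. x \<in> S i}) ` F)"
  have "finite ?G" "?G \<subseteq> U" using assms unfolding ulim_def by auto
  then have "I \<inter> \<Inter>?G \<noteq> {}" by (rule ultra_on_fip[OF U])
  then obtain i where "i \<in> I" "i \<in> \<Inter>?G" by blast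
  then show thesis by (intro that[of i]) auto
qed

lemma ulim_subset:
  assumes "ultra_on I U"
  shows "ulim I U S \<subseteq> (\<Union>i\<in>I. S i)"
proof
  fix x assume "x \<in> ulim I U S"
  then obtain i where "i \<in> I" "{x} \<subseteq> S i"
    using ulim_finite_subset[OF assms, of "{x}" S] unfolding ulim_def by blast
  then show "x \<in> (\<Union>i\<in>I. S i)" by blast
qed

lemma ultra_on_compl: "ultra_on I U \<Longrightarrow> X \<subseteq> I \<Longrightarrow> X \<notin> U \<Longrightarrow> I - X \<in> U"
  unfolding ultra_on_def by blast

lemma ulim_compl:
  assumes "ultra_on I U" and "x \<notin> ulim I U S"
  shows "I - {i \<in> I. x \<in> S i} \<in> U"
  using assms by (intro ultra_on_compl) (auto simp: ulim_def)

lemma ulim_disj: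
  assumes U: "ultra_on I U" and "X \<in> U" and decide: "\<forall>i\<in>I \<inter> X. x \<in> S i \<or> y \<in> S i"
  shows "x \<in> ulim I U S \<or> y \<in> ulim I U S"
proof (rule ccontr)
  assume "\<not> (x \<in> ulim I U S \<or> y \<in> ulim I U S)"
  then have "I - {i \<in> I. x \<in> S i} \<in> U" "I - {i \<in> I. y \<in> S i} \<in> U"
    by (simp_all add: ulim_compl[OF U])
  then have "I \<inter> \<Inter>{X, I - {i \<in> I. x \<in> S i}, I - {i \<in> I. y \<in> S i}} \<noteq> {}"
    using \<open>X \<in> U\<close> by (intro ultra_on_fip[OF U]) auto
  then obtain i where "i \<in> I" "i \<in> X" "x \<notin> S i" "y \<notin> S i" by auto
  then show False using decide by auto
qed

lemma image_ulim_subset: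
  assumes U: "ultra_on I U" and closed: "\<forall>i\<in>I. f ` S i \<subseteq> S i"
  shows "f ` ulim I U S \<subseteq> ulim I U S"
proof
  fix y assume "y \<in> f ` ulim I U S"
  then obtain x where x: "x \<in> ulim I U S" and y: "y = f x" by auto
  have "\<forall>i\<in>I \<inter> {i \<in> I. x \<in> S i}. f x \<in> S i \<or> f x \<in> S i" using closed by auto
  then have "f x \<in> ulim I U S \<or> f x \<in> ulim I U S"
    using x unfolding ulim_def by (intro ulim_disj[OF U, unfolded ulim_def]) auto
  then show "y \<in> ulim I U S" using y by simp
qed

section \<open>Invariant \<phi>-types from invariant extensions\<close>

lemma complete_type_of_assignment:
  assumes "\<forall>i. e i \<in> dom M"
  shows "complete_type ar_f ar_r M A n {\<psi>. fm_over ar_f ar_r A \<psi> \<and> fv \<psi> \<subseteq> {..<n} \<and> sat M e \<psi>}"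
  using assms unfolding complete_type_def finsat_def by auto

definition phi_instances ::
  "('f, 'r, 'a) struct \<Rightarrow> nat \<Rightarrow> nat \<Rightarrow> ('f, 'r, 'a) fm \<Rightarrow> ('f, 'r, 'a) fm set" where
  "phi_instances N n k \<phi> = {\<psi>. \<exists>m. (\<forall>i<k. m i \<in> dom N) \<and>
     (\<psi> = phi_inst \<phi> n k m \<or> \<psi> = Neg (phi_inst \<phi> n k m))}"

lemma phi_type_iff:
  "phi_type N n k \<phi> p \<longleftrightarrow> p \<subseteq> phi_instances N n k \<phi> \<and> finsat N p \<and>
     (\<forall>m. (\<forall>i<k. m i \<in> dom N) \<longrightarrow> phi_inst \<phi> n k m \<in> p \<or> Neg (phi_inst \<phi> n k m) \<in> p)"
  unfolding phi_type_def phi_instances_def ..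

lemma map_par_phi_instances:
  assumes "automorphism ar_f ar_r N \<sigma>" and "pars \<phi> = {}"
  shows "map_par \<sigma> ` phi_instances N n k \<phi> \<subseteq> phi_instances N n k \<phi>"
proof
  fix \<psi>' assume "\<psi>' \<in> map_par \<sigma> ` phi_instances N n k \<phi>"
  then obtain m where m: "\<forall>i<k. m i \<in> dom N"
    and "\<psi>' = phi_inst \<phi> n k (\<sigma> \<circ> m) \<or> \<psi>' = Neg (phi_inst \<phi> n k (\<sigma> \<circ> m))"
    unfolding phi_instances_def using map_par_phi_inst[OF assms(2)] by auto
  moreover have "\<forall>i<k. (\<sigma> \<circ> m) i \<in> dom N"
    using m automorphism_in_dom[OF assms(1)] by simp
  ultimately show "\<psi>' \<in> phi_instances N n k \<phi>"
    unfolding phi_instances_def by blast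
qed

lemma phi_type_restrict:
  assumes p: "complete_type ar_f ar_r N (dom N) n p" "invariant ar_f ar_r N A p"
    and \<phi>: "L_fm ar_f ar_r \<phi>" "fv \<phi> \<subseteq> {..<n + k}"
    and N: "is_struct ar_f N" "A \<subseteq> dom N"
  shows "phi_type N n k \<phi> (p \<inter> phi_instances N n k \<phi>)"
    and "invariant ar_f ar_r N A (p \<inter> phi_instances N n k \<phi>)"
proof -
  have "phi_inst \<phi> n k m \<in> p \<or> Neg (phi_inst \<phi> n k m) \<in> p" if "\<forall>i<k. m i \<in> dom N" for m
    using p(1) fm_over_phi_inst[OF \<phi>(1) that] fv_phi_inst[OF \<phi>(2)]
    unfolding complete_type_def by blast
  then show "phi_type N n k \<phi> (p \<inter> phi_instances N n k \<phi>)"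
    using p(1) finsat_mono unfolding phi_type_iff complete_type_def phi_instances_def by blast
  show "invariant ar_f ar_r N A (p \<inter> phi_instances N n k \<phi>)"
  proof (rule invariantI[OF N])
    show "\<forall>\<psi>\<in>p \<inter> phi_instances N n k \<phi>. pars \<psi> \<subseteq> dom N"
      using p(1) unfolding complete_type_def fm_over_def by blast
    fix \<sigma> assume "automorphism ar_f ar_r N \<sigma>" "\<forall>a\<in>A. \<sigma> a = a"
    then show "map_par \<sigma> ` (p \<inter> phi_instances N n k \<phi>) \<subseteq> p \<inter> phi_instances N n k \<phi>"
      using p(2) map_par_phi_instances[of ar_f ar_r N \<sigma> \<phi>] \<phi>(1)
      unfolding invariant_def fm_over_def by blast
  qed
qed

lemma invariant_phi_type_of_extension:
  assumes ext: "\<And>n q. complete_type ar_f ar_r M A n q \<Longrightarrow>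
      \<exists>p. complete_type ar_f ar_r N (dom N) n p \<and> q \<subseteq> p \<and> invariant ar_f ar_r N A p"
    and \<chi>: "fm_over ar_f ar_r A \<chi>" "fv \<chi> \<subseteq> {..<n}" "\<forall>i. e i \<in> dom M" "sat M e \<chi>"
    and \<phi>: "L_fm ar_f ar_r \<phi>" "fv \<phi> \<subseteq> {..<n + k}"
    and N: "is_struct ar_f N" "A \<subseteq> dom N"
  shows "\<exists>p. phi_type N n k \<phi> p \<and> invariant ar_f ar_r N A p \<and> finsat N (insert \<chi> p)"
proof -
  obtain p where p: "complete_type ar_f ar_r N (dom N) n p" "invariant ar_f ar_r N A p"
    and "{\<psi>. fm_over ar_f ar_r A \<psi> \<and> fv \<psi> \<subseteq> {..<n} \<and> sat M e \<psi>} \<subseteq> p"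
    using ext[OF complete_type_of_assignment[OF \<chi>(3)]] by blast
  then have "insert \<chi> (p \<inter> phi_instances N n k \<phi>) \<subseteq> p" using \<chi> by blast
  then have "finsat N (insert \<chi> (p \<inter> phi_instances N n k \<phi>))"
    using p(1) finsat_mono unfolding complete_type_def by blast
  then show ?thesis using phi_type_restrict[OF p \<phi> N] by blast
qed

section \<open>Invariant extensions from invariant \<phi>-types\<close>

text \<open>Finitely many L-formulas \<phi>_l(x; s), l < j, are coded into the single L-formula
  "for all l < j: s_(K+l) = s_(K+j) implies \<phi>_l(x; s)". Choosing the selector parameters with
  s_(K+l) = s_(K+j) = a and all other selectors b \<noteq> a turns an instance of it into an
  instance of \<phi>_l; this is why two distinct elements are needed.\<close>

definition select_fm :: "nat \<Rightarrow> nat \<Rightarrow> (('f, 'r, 'a) fm \<times> nat) list \<Rightarrow> ('f, 'r, 'a) fm" where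
  "select_fm n K ps = conjs (map (\<lambda>l. Imp (Eq (Var (n + K + l)) (Var (n + K + length ps))) (fst (ps ! l)))
     [0..<length ps])"

definition select_par :: "nat \<Rightarrow> nat \<Rightarrow> nat \<Rightarrow> nat \<Rightarrow> (nat \<Rightarrow> 'a) \<Rightarrow> 'a \<Rightarrow> 'a \<Rightarrow> nat \<Rightarrow> 'a" where
  "select_par K j k l m a b t = (if t < k then m t else if t < K \<or> t = K + l \<or> t = K + j then a else b)"

lemma L_fm_select_fm:
  assumes "\<forall>(\<phi>, k)\<in>set ps. L_fm ar_f ar_r \<phi> \<and> fv \<phi> \<subseteq> {..<n + k} \<and> k \<le> K"
  shows "L_fm ar_f ar_r (select_fm n K ps)" and "fv (select_fm n K ps) \<subseteq> {..<n + (K + length ps + 1)}"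
proof -
  have "L_fm ar_f ar_r (fst (ps ! l)) \<and> fv (fst (ps ! l)) \<subseteq> {..<n + K}" if "l < length ps" for l
    using assms nth_mem[OF that] by (cases "ps ! l") fastforce
  then have "L_fm ar_f ar_r (Imp (Eq (Var (n + K + l)) (Var (n + K + length ps))) (fst (ps ! l)))
      \<and> fv (Imp (Eq (Var (n + K + l)) (Var (n + K + length ps))) (fst (ps ! l)))
        \<subseteq> {..<n + (K + length ps + 1)}" if "l < length ps" for l
    using that by (fastforce simp: fm_over_def Imp_def)
  then show "L_fm ar_f ar_r (select_fm n K ps)" "fv (select_fm n K ps) \<subseteq> {..<n + (K + length ps + 1)}"
    unfolding select_fm_def fm_over_conjs fv_conjs by fastforce+
qed

lemma sat_select_fm:
  fixes ps :: "(('f, 'r, 'a) fm \<times> nat) list"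
  assumes "l < length ps" and "ps ! l = (\<phi>, k)" and "k \<le> K" and "fv \<phi> \<subseteq> {..<n + k}" and "a \<noteq> b"
  shows "sat N e (phi_inst (select_fm n K ps) n (K + length ps + 1) (select_par K (length ps) k l m a b))
     \<longleftrightarrow> sat N e (phi_inst \<phi> n k m)"
proof -
  define e' where "e' i = (if n \<le> i \<and> i < n + (K + length ps + 1)
      then select_par K (length ps) k l m a b (i - n) else e i)" for i
  have "e' (n + K + l') = e' (n + K + length ps) \<longleftrightarrow> l' = l" if "l' < length ps" for l'
    using that assms(1,3,5) unfolding e'_def select_par_def by auto
  then have "sat N e' (select_fm n K ps) \<longleftrightarrow> sat N e' \<phi>"
    using assms(1,2) unfolding select_fm_def sat_conjs by auto
  also have "\<dots> \<longleftrightarrow> sat N (\<lambda>i. if n \<le> i \<and> i < n + k then m (i - n) else e i) \<phi>"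
    using assms(3,4) by (intro sat_cong) (auto simp: e'_def select_par_def)
  finally show ?thesis unfolding sat_phi_inst e'_def .
qed

lemma select_par_in: "\<forall>t<k. m t \<in> D \<Longrightarrow> a \<in> D \<Longrightarrow> b \<in> D \<Longrightarrow> select_par K j k l m a b t \<in> D"
  unfolding select_par_def by auto

definition invariant_approx :: "('f \<Rightarrow> nat) \<Rightarrow> ('r \<Rightarrow> nat) \<Rightarrow> ('f, 'r, 'a) struct \<Rightarrow> 'a set \<Rightarrow> nat
    \<Rightarrow> (('f, 'r, 'a) fm \<times> nat) set \<Rightarrow> ('f, 'r, 'a) fm set \<Rightarrow> ('f, 'r, 'a) fm set \<Rightarrow> bool" where
  "invariant_approx ar_f ar_r N A n \<Phi> Q S \<longleftrightarrow>
     (\<forall>\<psi>\<in>S. fm_over ar_f ar_r (dom N) \<psi> \<and> fv \<psi> \<subseteq> {..<n}) \<and>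
     (\<forall>\<phi> k m. (\<phi>, k) \<in> \<Phi> \<and> (\<forall>i<k. m i \<in> dom N) \<longrightarrow>
        phi_inst \<phi> n k m \<in> S \<or> Neg (phi_inst \<phi> n k m) \<in> S) \<and>
     finsat N (S \<union> Q) \<and>
     (\<forall>\<sigma>. automorphism ar_f ar_r N \<sigma> \<and> (\<forall>a\<in>A. \<sigma> a = a) \<longrightarrow> map_par \<sigma> ` S \<subseteq> S)"

lemma invariant_approxI:
  assumes "\<And>\<psi>. \<psi> \<in> S \<Longrightarrow> fm_over ar_f ar_r (dom N) \<psi> \<and> fv \<psi> \<subseteq> {..<n}"
    and "\<And>\<phi> k m. (\<phi>, k) \<in> \<Phi> \<Longrightarrow> \<forall>i<k. m i \<in> dom N
      \<Longrightarrow> phi_inst \<phi> n k m \<in> S \<or> Neg (phi_inst \<phi> n k m) \<in> S"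
    and "finsat N (S \<union> Q)"
    and "\<And>\<sigma>. automorphism ar_f ar_r N \<sigma> \<Longrightarrow> \<forall>a\<in>A. \<sigma> a = a \<Longrightarrow> map_par \<sigma> ` S \<subseteq> S"
  shows "invariant_approx ar_f ar_r N A n \<Phi> Q S"
  unfolding invariant_approx_def using assms by blast

lemma invariant_approxD:
  assumes "invariant_approx ar_f ar_r N A n \<Phi> Q S"
  shows "\<psi> \<in> S \<Longrightarrow> fm_over ar_f ar_r (dom N) \<psi> \<and> fv \<psi> \<subseteq> {..<n}"
    and "(\<phi>, k) \<in> \<Phi> \<Longrightarrow> \<forall>i<k. m i \<in> dom N \<Longrightarrow> phi_inst \<phi> n k m \<in> S \<or> Neg (phi_inst \<phi> n k m) \<in> S"
    and "finsat N (S \<union> Q)"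
    and "automorphism ar_f ar_r N \<sigma> \<Longrightarrow> \<forall>a\<in>A. \<sigma> a = a \<Longrightarrow> map_par \<sigma> ` S \<subseteq> S"
  using assms unfolding invariant_approx_def by auto

lemma invariant_approx_singleton_dom:
  assumes single: "\<forall>a\<in>dom N. \<forall>b\<in>dom N. a = b"
    and e: "\<forall>i. e i \<in> dom N" "\<forall>\<psi>\<in>Q. sat N e \<psi>"
    and \<Phi>: "\<forall>(\<phi>, k)\<in>\<Phi>. L_fm ar_f ar_r \<phi> \<and> fv \<phi> \<subseteq> {..<n + k}"
  shows "invariant_approx ar_f ar_r N A n \<Phi> Q
    {\<psi>. fm_over ar_f ar_r (dom N) \<psi> \<and> fv \<psi> \<subseteq> {..<n} \<and> sat N e \<psi>}"
    (is "invariant_approx ar_f ar_r N A n \<Phi> Q ?S")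
proof (rule invariant_approxI)
  show "phi_inst \<phi> n k m \<in> ?S \<or> Neg (phi_inst \<phi> n k m) \<in> ?S"
    if "(\<phi>, k) \<in> \<Phi>" "\<forall>i<k. m i \<in> dom N" for \<phi> k m
  proof -
    have "L_fm ar_f ar_r \<phi>" "fv \<phi> \<subseteq> {..<n + k}" using \<Phi> that(1) by auto
    then have "fm_over ar_f ar_r (dom N) (phi_inst \<phi> n k m)" "fv (phi_inst \<phi> n k m) \<subseteq> {..<n}"
      using fm_over_phi_inst[OF _ that(2)] fv_phi_inst by blast+
    then show ?thesis by simp
  qed
  show "finsat N (?S \<union> Q)"
    unfolding finsat_def using e by auto
  show "map_par \<sigma> ` ?S \<subseteq> ?S" if aut: "automorphism ar_f ar_r N \<sigma>" for \<sigma>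
  proof -
    have "map_par \<sigma> \<psi> = \<psi>" if "\<psi> \<in> ?S" for \<psi>
    proof (rule map_par_fixed, rule ballI)
      fix a assume "a \<in> pars \<psi>"
      then have "a \<in> dom N" using that by (auto simp: fm_over_def)
      then show "\<sigma> a = a" using single automorphism_in_dom[OF aut] by blast
    qed
    then show ?thesis by auto
  qed
qed simp

lemma invariant_approx_select_fm:
  assumes N: "is_struct ar_f N" and ab: "a \<in> dom N" "b \<in> dom N" "a \<noteq> b"
    and ps: "\<forall>(\<phi>, k)\<in>set ps. L_fm ar_f ar_r \<phi> \<and> fv \<phi> \<subseteq> {..<n + k} \<and> k \<le> K"
    and P: "phi_type N n (K + length ps + 1) (select_fm n K ps) P" "invariant ar_f ar_r N A P"
      "finsat N (insert \<chi> P)"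
    and Q: "Q \<subseteq> consequences ar_f ar_r N n {\<chi>}"
  shows "invariant_approx ar_f ar_r N A n (set ps) Q (consequences ar_f ar_r N n P)"
proof (rule invariant_approxI)
  let ?k = "K + length ps + 1"
  show "\<psi> \<in> consequences ar_f ar_r N n P \<Longrightarrow> fm_over ar_f ar_r (dom N) \<psi> \<and> fv \<psi> \<subseteq> {..<n}"
    for \<psi>
    by (simp add: consequences_def)
  show "phi_inst \<phi> n k m \<in> consequences ar_f ar_r N n P
      \<or> Neg (phi_inst \<phi> n k m) \<in> consequences ar_f ar_r N n P"
    if \<phi>k: "(\<phi>, k) \<in> set ps" and m: "\<forall>i<k. m i \<in> dom N" for \<phi> k m
  proof -
    obtain l where l: "l < length ps" "ps ! l = (\<phi>, k)" using \<phi>k by (auto simp: in_set_conv_nth)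
    have \<phi>: "L_fm ar_f ar_r \<phi>" "fv \<phi> \<subseteq> {..<n + k}" "k \<le> K" using ps \<phi>k by auto
    let ?w = "phi_inst (select_fm n K ps) n ?k (select_par K (length ps) k l m a b)"
    have decide: "phi_inst (select_fm n K ps) n ?k m' \<in> P \<or> Neg (phi_inst (select_fm n K ps) n ?k m') \<in> P"
      if "\<forall>i<?k. m' i \<in> dom N" for m'
      using P(1) that by (simp add: phi_type_iff)
    have "\<forall>i<?k. select_par K (length ps) k l m a b i \<in> dom N"
      by (intro allI impI select_par_in[OF m ab(1,2)])
    then have "?w \<in> P \<or> Neg ?w \<in> P" by (rule decide)
    moreover have equiv: "sat N e ?w \<longleftrightarrow> sat N e (phi_inst \<phi> n k m)" for e
      by (rule sat_select_fm[OF l \<phi>(3,2) ab(3)])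
    moreover have "fm_over ar_f ar_r (dom N) (phi_inst \<phi> n k m)" "fv (phi_inst \<phi> n k m) \<subseteq> {..<n}"
      using fm_over_phi_inst[OF \<phi>(1) m] fv_phi_inst[OF \<phi>(2)] by blast+
    ultimately show ?thesis
      using consequencesI[of ar_f ar_r N "phi_inst \<phi> n k m" n ?w P]
        consequencesI[of ar_f ar_r N "Neg (phi_inst \<phi> n k m)" n "Neg ?w" P]
      by auto
  qed
  have "consequences ar_f ar_r N n P \<union> Q \<subseteq> consequences ar_f ar_r N n (insert \<chi> P)"
    using Q consequences_mono[of P "insert \<chi> P"] consequences_mono[of "{\<chi>}" "insert \<chi> P"] by blast
  then show "finsat N (consequences ar_f ar_r N n P \<union> Q)"
    using finsat_consequences[OF P(3)] finsat_mono by blast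
  have P_fm: "\<forall>w\<in>P. fm_over ar_f ar_r (dom N) w"
    using P(1) fm_over_phi_inst[OF L_fm_select_fm(1)[OF ps]]
    by (auto simp: phi_type_iff phi_instances_def)
  show "map_par \<sigma> ` consequences ar_f ar_r N n P \<subseteq> consequences ar_f ar_r N n P"
    if "automorphism ar_f ar_r N \<sigma>" "\<forall>a\<in>A. \<sigma> a = a" for \<sigma>
  proof -
    have "map_par \<sigma> ` P \<subseteq> P" using P(2) that by (simp add: invariant_def)
    then show ?thesis by (rule map_par_consequences[OF N that(1) _ P_fm])
  qed
qed

lemma invariant_approx_exists:
  fixes M N :: "('f, 'r, 'a) struct"
  assumes phi_types: "\<And>n k \<chi> \<phi>. fm_over ar_f ar_r A \<chi> \<Longrightarrow> fv \<chi> \<subseteq> {..<n}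
      \<Longrightarrow> (\<exists>e. (\<forall>i. e i \<in> dom M) \<and> sat M e \<chi>) \<Longrightarrow> L_fm ar_f ar_r \<phi> \<Longrightarrow> fv \<phi> \<subseteq> {..<n + k}
      \<Longrightarrow> \<exists>p. phi_type N n k \<phi> p \<and> invariant ar_f ar_r N A p \<and> finsat N (insert \<chi> p)"
    and q: "complete_type ar_f ar_r M A n q"
    and \<Phi>: "finite \<Phi>" "\<forall>(\<phi>, k)\<in>\<Phi>. L_fm ar_f ar_r \<phi> \<and> fv \<phi> \<subseteq> {..<n + k}"
    and Q: "finite Q" "Q \<subseteq> q"
    and N: "is_struct ar_f N" "A \<subseteq> dom N"
  shows "\<exists>S. invariant_approx ar_f ar_r N A n \<Phi> Q S"
proof -
  obtain ps where ps: "set ps = \<Phi>" using finite_list[OF \<Phi>(1)] by blast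
  obtain qs where qs: "set qs = Q" using finite_list[OF Q(1)] by blast
  define K where "K = sum_list (map snd ps)"
  have ps_wf: "\<forall>(\<phi>, k)\<in>set ps. L_fm ar_f ar_r \<phi> \<and> fv \<phi> \<subseteq> {..<n + k} \<and> k \<le> K"
    using \<Phi>(2) ps member_le_sum_list[of _ "map snd ps"] unfolding K_def by fastforce
  have q_fm: "\<forall>\<psi>\<in>Q. fm_over ar_f ar_r A \<psi> \<and> fv \<psi> \<subseteq> {..<n}"
    using q Q(2) unfolding complete_type_def by blast
  have "fm_over ar_f ar_r A (conjs qs)" "fv (conjs qs) \<subseteq> {..<n}"
    using q_fm by (auto simp: fm_over_conjs fv_conjs qs)
  moreover have "\<exists>e. (\<forall>i. e i \<in> dom M) \<and> sat M e (conjs qs)"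
    using q Q unfolding complete_type_def finsat_def by (simp add: sat_conjs qs)
  ultimately obtain P where P: "phi_type N n (K + length ps + 1) (select_fm n K ps) P"
      "invariant ar_f ar_r N A P" "finsat N (insert (conjs qs) P)"
    using phi_types L_fm_select_fm[OF ps_wf] by blast
  show ?thesis
  proof (cases "\<exists>a\<in>dom N. \<exists>b\<in>dom N. a \<noteq> b")
    case True
    then obtain a b where ab: "a \<in> dom N" "b \<in> dom N" "a \<noteq> b" by blast
    have "Q \<subseteq> consequences ar_f ar_r N n {conjs qs}"
      using q_fm N(2) unfolding consequences_def fm_over_def by (auto simp: sat_conjs qs)
    then show ?thesis
      using invariant_approx_select_fm[OF N(1) ab ps_wf P] ps by blast
  next
    case False
    obtain e where e: "\<forall>i. e i \<in> dom N" "sat N e (conjs qs)"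
      using P(3) finsat_mono[of N "insert (conjs qs) P" "{conjs qs}"] unfolding finsat_def by auto
    then have "invariant_approx ar_f ar_r N A n \<Phi> Q
        {\<psi>. fm_over ar_f ar_r (dom N) \<psi> \<and> fv \<psi> \<subseteq> {..<n} \<and> sat N e \<psi>}"
      using False \<Phi>(2) by (intro invariant_approx_singleton_dom) (auto simp: sat_conjs qs)
    then show ?thesis by blast
  qed
qed

text \<open>The limit is taken along an ultrafilter on finite sets of demands: Inl (\<phi>, k) asks to
  decide all instances of \<phi>, Inr \<psi> asks for consistency with \<psi>.\<close>

locale approx_limit =
  fixes ar_f :: "'f \<Rightarrow> nat" and ar_r :: "'r \<Rightarrow> nat" and N :: "('f, 'r, 'a) struct"
    and A :: "'a set" and n :: nat and D :: "(('f, 'r, 'a) fm \<times> nat + ('f, 'r, 'a) fm) set"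
    and U and S
  assumes ultra: "ultra_on (Fpow D) U"
    and cone: "\<And>\<Delta>. \<Delta> \<in> Fpow D \<Longrightarrow> {\<Delta>' \<in> Fpow D. \<Delta> \<subseteq> \<Delta>'} \<in> U"
    and approx: "\<And>\<Delta>. \<Delta> \<in> Fpow D \<Longrightarrow> invariant_approx ar_f ar_r N A n (Inl -` \<Delta>) (Inr -` \<Delta>) (S \<Delta>)"
begin

definition lim :: "('f, 'r, 'a) fm set" where
  "lim = ulim (Fpow D) U S"

lemma lim_fm: "\<psi> \<in> lim \<Longrightarrow> fm_over ar_f ar_r (dom N) \<psi> \<and> fv \<psi> \<subseteq> {..<n}"
proof -
  assume "\<psi> \<in> lim"
  then have "\<psi> \<in> (\<Union>\<Delta>\<in>Fpow D. S \<Delta>)"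
    using ulim_subset[OF ultra, of S] unfolding lim_def by (rule rev_subsetD)
  then obtain \<Delta> where "\<Delta> \<in> Fpow D" "\<psi> \<in> S \<Delta>" by (rule UN_E)
  then show ?thesis by (rule invariant_approxD(1)[OF approx])
qed

lemma finsat_lim:
  assumes "Inr ` Q \<subseteq> D"
  shows "finsat N (lim \<union> Q)"
  unfolding finsat_def
proof (intro allI impI)
  fix F assume F: "F \<subseteq> lim \<union> Q \<and> finite F"
  then have "Inr ` (F \<inter> Q) \<in> Fpow D" using assms by (auto simp: Fpow_def)
  moreover have "finite (F \<inter> lim)" "F \<inter> lim \<subseteq> ulim (Fpow D) U S" using F unfolding lim_def by auto
  ultimately obtain \<Delta> where
    "\<Delta> \<in> Fpow D" "\<Delta> \<in> {\<Delta>' \<in> Fpow D. Inr ` (F \<inter> Q) \<subseteq> \<Delta>'}" "F \<inter> lim \<subseteq> S \<Delta>"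
    using ulim_finite_subset[OF ultra _ _ cone] by blast
  then have \<Delta>: "\<Delta> \<in> Fpow D" "Inr ` (F \<inter> Q) \<subseteq> \<Delta>" "F \<inter> lim \<subseteq> S \<Delta>" by simp_all
  then have "F \<subseteq> S \<Delta> \<union> Inr -` \<Delta>" using F by blast
  moreover have "finsat N (S \<Delta> \<union> Inr -` \<Delta>)" by (rule invariant_approxD(3)[OF approx[OF \<Delta>(1)]])
  ultimately show "\<exists>e. (\<forall>i. e i \<in> dom N) \<and> (\<forall>\<psi>\<in>F. sat N e \<psi>)"
    using F unfolding finsat_def by blast
qed

lemma lim_decides:
  assumes D: "\<And>\<phi> k. L_fm ar_f ar_r \<phi> \<Longrightarrow> fv \<phi> \<subseteq> {..<n + k} \<Longrightarrow> Inl (\<phi>, k) \<in> D"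
    and "dom N \<noteq> {}" and \<psi>: "fm_over ar_f ar_r (dom N) \<psi>" "fv \<psi> \<subseteq> {..<n}"
  shows "\<psi> \<in> lim \<or> Neg \<psi> \<in> lim"
proof -
  obtain d where "d \<in> dom N" using \<open>dom N \<noteq> {}\<close> by blast
  then obtain \<phi> k m where \<phi>: "L_fm ar_f ar_r \<phi>" "fv \<phi> \<subseteq> {..<n + k}" and m: "\<forall>i<k. m i \<in> dom N"
    and \<psi>: "phi_inst \<phi> n k m = \<psi>"
    by (rule ex_phi_inst[OF \<psi>])
  have "{Inl (\<phi>, k)} \<in> Fpow D" using D[OF \<phi>] by (simp add: Fpow_def)
  then have X: "{\<Delta>' \<in> Fpow D. {Inl (\<phi>, k)} \<subseteq> \<Delta>'} \<in> U" by (rule cone)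
  have "\<psi> \<in> S \<Delta> \<or> Neg \<psi> \<in> S \<Delta>" if "\<Delta> \<in> Fpow D" "Inl (\<phi>, k) \<in> \<Delta>" for \<Delta>
    using invariant_approxD(2)[OF approx[OF that(1)], of \<phi> k m] that(2) m \<psi> by simp
  then have "\<forall>\<Delta>\<in>Fpow D \<inter> {\<Delta>' \<in> Fpow D. {Inl (\<phi>, k)} \<subseteq> \<Delta>'}. \<psi> \<in> S \<Delta> \<or> Neg \<psi> \<in> S \<Delta>"
    by simp
  then show ?thesis unfolding lim_def by (rule ulim_disj[OF ultra X])
qed

lemma complete_type_lim:
  assumes "\<And>\<phi> k. L_fm ar_f ar_r \<phi> \<Longrightarrow> fv \<phi> \<subseteq> {..<n + k} \<Longrightarrow> Inl (\<phi>, k) \<in> D"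
    and "dom N \<noteq> {}"
  shows "complete_type ar_f ar_r N (dom N) n lim"
  using lim_fm finsat_lim[of "{}"] lim_decides[OF assms] unfolding complete_type_def by auto

lemma subset_lim:
  assumes "\<And>\<phi> k. L_fm ar_f ar_r \<phi> \<Longrightarrow> fv \<phi> \<subseteq> {..<n + k} \<Longrightarrow> Inl (\<phi>, k) \<in> D"
    and "dom N \<noteq> {}" and "Inr ` Q \<subseteq> D" and Q: "\<forall>\<psi>\<in>Q. fm_over ar_f ar_r (dom N) \<psi> \<and> fv \<psi> \<subseteq> {..<n}"
  shows "Q \<subseteq> lim"
proof
  fix \<psi> assume "\<psi> \<in> Q"
  have "Neg \<psi> \<notin> lim"
  proof
    assume "Neg \<psi> \<in> lim"
    then have "{\<psi>, Neg \<psi>} \<subseteq> lim \<union> Q" using \<open>\<psi> \<in> Q\<close> by simp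
    then obtain e where "sat N e \<psi>" "sat N e (Neg \<psi>)"
      using finsat_lim[OF assms(3)] unfolding finsat_def by (metis finite.emptyI finite.insertI insertCI)
    then show False by simp
  qed
  then show "\<psi> \<in> lim" using lim_decides[OF assms(1,2)] Q \<open>\<psi> \<in> Q\<close> by blast
qed

lemma invariant_lim:
  assumes "is_struct ar_f N" "A \<subseteq> dom N"
  shows "invariant ar_f ar_r N A lim"
proof (rule invariantI[OF assms])
  show "\<forall>\<psi>\<in>lim. pars \<psi> \<subseteq> dom N" using lim_fm by (simp add: fm_over_def)
  fix \<sigma> assume aut: "automorphism ar_f ar_r N \<sigma>" "\<forall>a\<in>A. \<sigma> a = a"
  have "map_par \<sigma> ` S \<Delta> \<subseteq> S \<Delta>" if "\<Delta> \<in> Fpow D" for \<Delta>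
    by (rule invariant_approxD(4)[OF approx[OF that] aut])
  then show "map_par \<sigma> ` lim \<subseteq> lim" unfolding lim_def by (intro image_ulim_subset[OF ultra]) blast
qed

end

lemma invariant_extension_of_phi_types:
  fixes M N :: "('f, 'r, 'a) struct"
  assumes phi_types: "\<And>n k \<chi> \<phi>. fm_over ar_f ar_r A \<chi> \<Longrightarrow> fv \<chi> \<subseteq> {..<n}
      \<Longrightarrow> (\<exists>e. (\<forall>i. e i \<in> dom M) \<and> sat M e \<chi>) \<Longrightarrow> L_fm ar_f ar_r \<phi> \<Longrightarrow> fv \<phi> \<subseteq> {..<n + k}
      \<Longrightarrow> \<exists>p. phi_type N n k \<phi> p \<and> invariant ar_f ar_r N A p \<and> finsat N (insert \<chi> p)"
    and q: "complete_type ar_f ar_r M A n q"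
    and N: "is_struct ar_f N" "A \<subseteq> dom N"
  shows "\<exists>p. complete_type ar_f ar_r N (dom N) n p \<and> q \<subseteq> p \<and> invariant ar_f ar_r N A p"
proof -
  define D :: "(('f, 'r, 'a) fm \<times> nat + ('f, 'r, 'a) fm) set" where
    "D = Inl ` {(\<phi>, k). L_fm ar_f ar_r \<phi> \<and> fv \<phi> \<subseteq> {..<n + k}} \<union> Inr ` q"
  obtain U where U: "ultra_on (Fpow D) U" "\<forall>\<Delta>\<in>Fpow D. {\<Delta>' \<in> Fpow D. \<Delta> \<subseteq> \<Delta>'} \<in> U"
    by (rule ultra_on_Fpow)
  define S where "S \<Delta> = (SOME S. invariant_approx ar_f ar_r N A n (Inl -` \<Delta>) (Inr -` \<Delta>) S)" for \<Delta>
  have "invariant_approx ar_f ar_r N A n (Inl -` \<Delta>) (Inr -` \<Delta>) (S \<Delta>)" if "\<Delta> \<in> Fpow D" for \<Delta>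
  proof -
    have "finite \<Delta>" "\<Delta> \<subseteq> D" using that by (auto simp: Fpow_def)
    then have "finite (Inl -` \<Delta>)" "finite (Inr -` \<Delta>)"
      "\<forall>(\<phi>, k)\<in>Inl -` \<Delta>. L_fm ar_f ar_r \<phi> \<and> fv \<phi> \<subseteq> {..<n + k}" "Inr -` \<Delta> \<subseteq> q"
      by (auto simp: D_def intro: finite_vimageI)
    then have "\<exists>S. invariant_approx ar_f ar_r N A n (Inl -` \<Delta>) (Inr -` \<Delta>) S"
      by (intro invariant_approx_exists[OF phi_types q _ _ _ _ N])
    then show ?thesis unfolding S_def by (rule someI_ex)
  qed
  then interpret approx_limit ar_f ar_r N A n D U S
    using U by unfold_locales auto
  have D: "\<And>\<phi> k. L_fm ar_f ar_r \<phi> \<Longrightarrow> fv \<phi> \<subseteq> {..<n + k} \<Longrightarrow> Inl (\<phi>, k) \<in> D" "Inr ` q \<subseteq> D"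
    by (auto simp: D_def)
  have "dom N \<noteq> {}" using N(1) by (simp add: is_struct_def)
  moreover have "\<forall>\<psi>\<in>q. fm_over ar_f ar_r (dom N) \<psi> \<and> fv \<psi> \<subseteq> {..<n}"
    using q N(2) unfolding complete_type_def fm_over_def by blast
  ultimately show ?thesis
    using complete_type_lim[OF D(1)] subset_lim[OF D(1) _ D(2)] invariant_lim[OF N] by blast
qed

theorem mainTheorem14:
  fixes ar_f :: "'f \<Rightarrow> nat" and ar_r :: "'r \<Rightarrow> nat"
    and T :: "('f, 'r, 'a) fm set" and M :: "('f, 'r, 'a) struct" and A :: "'a set"
  assumes "is_theory ar_f ar_r T" and "models ar_f ar_r T M" and "A \<subseteq> dom M"
  shows "(\<forall>n k (\<chi> :: ('f, 'r, 'a) fm) \<phi> N.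
            fm_over ar_f ar_r A \<chi> \<and> fv \<chi> \<subseteq> {..<n} \<and>
            (\<exists>e. (\<forall>i. e i \<in> dom M) \<and> sat M e \<chi>) \<and>
            L_fm ar_f ar_r \<phi> \<and> fv \<phi> \<subseteq> {..<n + k} \<and>
            models ar_f ar_r T N \<and> equiv_over ar_f ar_r A M N \<longrightarrow>
            (\<exists>p. phi_type N n k \<phi> p \<and> invariant ar_f ar_r N A p \<and> finsat N (insert \<chi> p)))
     \<longleftrightarrow>
         (\<forall>N. models ar_f ar_r T N \<and> equiv_over ar_f ar_r A M N \<longrightarrow>
            (\<forall>n q. complete_type ar_f ar_r M A n q \<longrightarrow>
               (\<exists>p. complete_type ar_f ar_r N (dom N) n p \<and> q \<subseteq> p \<and> invariant ar_f ar_r N A p)))"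
  (is "?phi_types \<longleftrightarrow> ?extensions")
proof
  have N: "is_struct ar_f N" "A \<subseteq> dom N" if "models ar_f ar_r T N \<and> equiv_over ar_f ar_r A M N" for N
    using that unfolding models_def equiv_over_def by auto
  show ?extensions if phi_types: ?phi_types
  proof (intro allI impI)
    fix N :: "('f, 'r, 'a) struct" and n q
    assume NM: "models ar_f ar_r T N \<and> equiv_over ar_f ar_r A M N" and "complete_type ar_f ar_r M A n q"
    then show "\<exists>p. complete_type ar_f ar_r N (dom N) n p \<and> q \<subseteq> p \<and> invariant ar_f ar_r N A p"
      by (intro invariant_extension_of_phi_types N) (use phi_types in blast)+
  qed
  show ?phi_types if extensions: ?extensions
  proof (intro allI impI)
    fix n k and \<chi> \<phi> :: "('f, 'r, 'a) fm" and N :: "('f, 'r, 'a) struct"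
    assume "fm_over ar_f ar_r A \<chi> \<and> fv \<chi> \<subseteq> {..<n} \<and> (\<exists>e. (\<forall>i. e i \<in> dom M) \<and> sat M e \<chi>) \<and>
      L_fm ar_f ar_r \<phi> \<and> fv \<phi> \<subseteq> {..<n + k} \<and> models ar_f ar_r T N \<and> equiv_over ar_f ar_r A M N"
    then show "\<exists>p. phi_type N n k \<phi> p \<and> invariant ar_f ar_r N A p \<and> finsat N (insert \<chi> p)"
      using extensions N by (elim conjE exE) (rule invariant_phi_type_of_extension; blast)
  qed
qed

end
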